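(* Let $a\in\mathbb Z^3$ and $A,N\ge1$ with $|a|\sim A$. Then for either choice of sign $\pm$, $$\sup_{m\in\mathbb Z}\#\{n\in\mathbb Z^3:|n|\sim N,\ |\langle a+n\rangle\pm\langle n\rangle-m|\lesssim1\}\lesssim\min(A,N)^{-1}N^3.$$
   Context: $\langle n\rangle=(1+|n|^2)^{1/2}$. "$|x|\sim N$" means $c^{-1}N\le|x|\le cN$ for a fixed absolute constant $c$ (and $|x|\le c$ when the scale is $1$); "$\lesssim1$" inside the set means bounded by a fixed absolute constant. Implicit constants are absolute. *)

theory Defs
  imports "HOL-Analysis.Analysis"
begin

definition inorm :: "int ^ 3 \<Rightarrow> real" where
  "inorm v = sqrt (\<Sum>i\<in>UNIV. (real_of_int (v $ i))^2)"

definition jbr :: "int ^ 3 \<Rightarrow> real" where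
  "jbr v = sqrt (1 + (inorm v)^2)"

text \<open>x ~ N with absolute constant c: c^-1 N \<le> x \<le> c N, and x \<le> c when the scale is 1.\<close>
definition sim :: "real \<Rightarrow> real \<Rightarrow> real \<Rightarrow> bool" where
  "sim c x N = (if N = 1 then x \<le> c else N / c \<le> x \<and> x \<le> c * N)"

end

theory Submission
  imports Defs
begin

(* The balls of radius 1/2 about the lattice points in question are disjoint, so there are at
   most 6/pi times as many points as the volume of the region these balls fill.  Rotate a to
   |a| e_1 and write x = (z, w) with z real, w in R^2 and q = |x|^2 = z^2 + |w|^2; then
   <a + x> +- <x> depends only on (z, q).  For fixed q it increases in z at rate at least
   |a| / (1 + R + |a|), so the q-sections of a level set {|<a + x> +- <x> - m| <= C} have length
   O(C (R + |a|) / |a|); for fixed z it is monotone in q, so the w-sections are annuli of area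
   pi times the length of the q-section.  Fubini, applied twice, bounds the volume of the level
   set within the ball of radius R by O(R^2 (R + |a|) / |a|), which is O(N^3 / min(A, N)) for
   R ~ N and |a| ~ A. *)

section \<open>Monotonicity of the phase\<close>

lemma sqrt_diff_ge:
  fixes a b U :: real
  assumes "0 \<le> a" "a \<le> b" "b \<le> U\<^sup>2" "U > 0"
  shows "(b - a) / (2 * U) \<le> sqrt b - sqrt a"
proof -
  have "sqrt a \<le> U" "sqrt b \<le> U"
    using assms real_sqrt_le_mono[of _ "U\<^sup>2"] by auto
  moreover have "sqrt a \<le> sqrt b" using assms by simp
  ultimately have "(sqrt b - sqrt a) * (sqrt b + sqrt a) \<le> (sqrt b - sqrt a) * (2 * U)"
    by (intro mult_left_mono) linarith+
  also have "(sqrt b - sqrt a) * (sqrt b + sqrt a) = b - a"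
    using assms by (simp add: algebra_simps)
  finally show ?thesis using assms by (simp add: divide_le_eq mult.commute)
qed

(* phase |a| (+-1) z q = <a + x> +- <x> for x with x . a = |a| z and |x|^2 = q, see phase_vec3. *)
definition phase :: "real \<Rightarrow> real \<Rightarrow> real \<Rightarrow> real \<Rightarrow> real" where
  "phase \<alpha> s z q = sqrt (1 + q + 2 * \<alpha> * z + \<alpha>\<^sup>2) + s * sqrt (1 + q)"

lemma phase_radicand_ge_1:
  fixes \<alpha> z q :: real
  assumes "z\<^sup>2 \<le> q"
  shows "1 \<le> 1 + q + 2 * \<alpha> * z + \<alpha>\<^sup>2"
proof -
  have "1 + q + 2 * \<alpha> * z + \<alpha>\<^sup>2 = 1 + (q - z\<^sup>2) + (z + \<alpha>)\<^sup>2"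
    by (simp add: power2_eq_square algebra_simps)
  thus ?thesis using assms by (smt (verit) zero_le_power2)
qed

lemma phase_increase_in_z:
  assumes "\<alpha> > 0" "R \<ge> 0" "z1 \<le> z2" "z1\<^sup>2 \<le> q" "z2\<^sup>2 \<le> q" "q \<le> R\<^sup>2"
  shows "\<alpha> * (z2 - z1) / (1 + R + \<alpha>) \<le> phase \<alpha> s z2 q - phase \<alpha> s z1 q"
proof -
  define A where "A = 1 + q + 2 * \<alpha> * z1 + \<alpha>\<^sup>2"
  define B where "B = 1 + q + 2 * \<alpha> * z2 + \<alpha>\<^sup>2"
  have "\<bar>z2\<bar> \<le> \<bar>R\<bar>"
    using assms(5,6) abs_le_square_iff[of z2 R] by linarith
  hence "\<alpha> * z2 \<le> \<alpha> * R"
    using assms(1,2) by (intro mult_left_mono) auto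
  moreover have "(1 + R + \<alpha>)\<^sup>2 = 1 + R\<^sup>2 + \<alpha>\<^sup>2 + 2 * R + 2 * \<alpha> + 2 * \<alpha> * R"
    by (simp add: power2_eq_square algebra_simps)
  ultimately have "B \<le> (1 + R + \<alpha>)\<^sup>2"
    using assms(1,2,6) unfolding B_def by linarith
  moreover have "0 \<le> A" "A \<le> B"
    using phase_radicand_ge_1[OF assms(4), of \<alpha>] assms(1,3) unfolding A_def B_def by auto
  ultimately have "(B - A) / (2 * (1 + R + \<alpha>)) \<le> sqrt B - sqrt A"
    using assms(1,2) by (intro sqrt_diff_ge) auto
  moreover have "(B - A) / (2 * (1 + R + \<alpha>)) = \<alpha> * (z2 - z1) / (1 + R + \<alpha>)"
    using assms(1,2) by (simp add: A_def B_def field_simps)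
  ultimately show ?thesis by (simp add: phase_def A_def B_def)
qed

lemma phase_level_set_thin_in_z:
  assumes "\<alpha> > 0" "R \<ge> 0" "z1\<^sup>2 \<le> q" "z2\<^sup>2 \<le> q" "q \<le> R\<^sup>2"
    and "\<bar>phase \<alpha> s z1 q - m\<bar> \<le> C" "\<bar>phase \<alpha> s z2 q - m\<bar> \<le> C"
  shows "\<bar>z2 - z1\<bar> \<le> 2 * C * (1 + R + \<alpha>) / \<alpha>"
proof -
  have "\<alpha> * \<bar>z2 - z1\<bar> / (1 + R + \<alpha>) \<le> 2 * C"
  proof (cases "z1 \<le> z2")
    case True
    have "\<alpha> * (z2 - z1) / (1 + R + \<alpha>) \<le> phase \<alpha> s z2 q - phase \<alpha> s z1 q"
      using phase_increase_in_z[OF assms(1,2) True assms(3,4,5)] .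
    also have "\<dots> \<le> 2 * C" using assms(6,7) unfolding abs_le_iff by linarith
    finally show ?thesis using True by (simp add: abs_of_nonneg)
  next
    case False
    hence "z2 \<le> z1" by simp
    have "\<alpha> * (z1 - z2) / (1 + R + \<alpha>) \<le> phase \<alpha> s z1 q - phase \<alpha> s z2 q"
      using phase_increase_in_z[OF assms(1,2) \<open>z2 \<le> z1\<close> assms(4,3,5)] .
    also have "\<dots> \<le> 2 * C" using assms(6,7) unfolding abs_le_iff by linarith
    finally show ?thesis using False by (simp add: abs_of_neg)
  qed
  hence "\<alpha> * \<bar>z2 - z1\<bar> \<le> 2 * C * (1 + R + \<alpha>)"
    using assms(1,2) by (simp add: divide_le_eq)
  thus ?thesis using assms(1) by (simp add: le_divide_eq mult.commute)
qed

lemma sqrt_shift_diff_monotone: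
  fixes K :: real
  shows "mono_on {t. 0 < t \<and> 0 \<le> t + K} (\<lambda>t. sqrt (t + K) - sqrt t)
       \<or> antimono_on {t. 0 < t \<and> 0 \<le> t + K} (\<lambda>t. sqrt (t + K) - sqrt t)"
proof -
  let ?T = "{t. 0 < t \<and> 0 \<le> t + K}"
  define D where "D t = sqrt (t + K) + sqrt t" for t
  have D_pos: "0 < D t" if "t \<in> ?T" for t
    using that by (simp add: D_def add_nonneg_pos)
  have D_mono: "D t \<le> D t'" if "t \<in> ?T" "t \<le> t'" for t t'
    using that by (simp add: D_def add_mono)
  have eq: "sqrt (t + K) - sqrt t = K / D t" if "t \<in> ?T" for t
  proof -
    have "(sqrt (t + K) - sqrt t) * D t = (sqrt (t + K))\<^sup>2 - (sqrt t)\<^sup>2"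
      unfolding D_def power2_eq_square by (simp add: algebra_simps)
    also have "\<dots> = K" using that by simp
    finally show ?thesis using D_pos[OF that] by (simp add: eq_divide_eq)
  qed
  show ?thesis
  proof (cases "K \<ge> 0")
    case True
    have "antimono_on ?T (\<lambda>t. sqrt (t + K) - sqrt t)"
    proof (rule monotone_onI)
      fix t t' assume "t \<in> ?T" "t' \<in> ?T" "t \<le> t'"
      thus "sqrt (t' + K) - sqrt t' \<le> sqrt (t + K) - sqrt t"
        using True D_pos D_mono by (simp add: eq divide_left_mono)
    qed
    thus ?thesis ..
  next
    case False
    have "mono_on ?T (\<lambda>t. sqrt (t + K) - sqrt t)"
    proof (rule mono_onI)
      fix t t' assume "t \<in> ?T" "t' \<in> ?T" "t \<le> t'"
      thus "sqrt (t + K) - sqrt t \<le> sqrt (t' + K) - sqrt t'"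
        using False D_pos D_mono by (simp add: eq divide_left_mono_neg)
    qed
    thus ?thesis ..
  qed
qed

lemma phase_monotone_in_q:
  fixes \<alpha> s z :: real
  assumes "s \<in> {1, -1}"
  shows "mono_on {z\<^sup>2..} (phase \<alpha> s z) \<or> antimono_on {z\<^sup>2..} (phase \<alpha> s z)"
proof (cases "s = 1")
  case True
  have "mono_on {z\<^sup>2..} (phase \<alpha> s z)"
    by (rule mono_onI) (simp add: phase_def True add_mono)
  thus ?thesis ..
next
  case False
  define K where "K = 2 * \<alpha> * z + \<alpha>\<^sup>2"
  have phase_eq: "phase \<alpha> s z = (\<lambda>t. sqrt (t + K) - sqrt t) \<circ> (\<lambda>q. 1 + q)"
    using assms False by (auto simp: phase_def K_def add.assoc)
  have shift: "mono_on {z\<^sup>2..} (\<lambda>q. 1 + q :: real)"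
    by (rule mono_onI) simp
  have image: "(\<lambda>q. 1 + q) ` {z\<^sup>2..} \<subseteq> {t. 0 < t \<and> 0 \<le> t + K}"
  proof
    fix t assume "t \<in> (\<lambda>q. 1 + q) ` {z\<^sup>2..}"
    then obtain q where "z\<^sup>2 \<le> q" "t = 1 + q" by blast
    moreover have "0 \<le> q" using \<open>z\<^sup>2 \<le> q\<close> by (meson order_trans zero_le_power2)
    ultimately show "t \<in> {t. 0 < t \<and> 0 \<le> t + K}"
      using phase_radicand_ge_1[of z q \<alpha>] by (simp add: K_def add.assoc)
  qed
  from sqrt_shift_diff_monotone[of K] show ?thesis
  proof
    assume "mono_on {t. 0 < t \<and> 0 \<le> t + K} (\<lambda>t. sqrt (t + K) - sqrt t)"
    from monotone_on_o[OF this shift image] show ?thesis unfolding phase_eq ..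
  next
    assume "antimono_on {t. 0 < t \<and> 0 \<le> t + K} (\<lambda>t. sqrt (t + K) - sqrt t)"
    from monotone_on_o[OF this shift image] show ?thesis unfolding phase_eq ..
  qed
qed

lemma is_interval_level_set_monotone:
  fixes f :: "real \<Rightarrow> real"
  assumes "is_interval I" "mono_on I f \<or> antimono_on I f"
  shows "is_interval {x \<in> I. \<bar>f x - m\<bar> \<le> C}"
  unfolding is_interval_1
proof (intro ballI allI impI)
  fix a b x assume a: "a \<in> {x \<in> I. \<bar>f x - m\<bar> \<le> C}" and b: "b \<in> {x \<in> I. \<bar>f x - m\<bar> \<le> C}"
    and x: "a \<le> x \<and> x \<le> b"
  have "x \<in> I" using assms(1) a b x unfolding is_interval_1 by blast
  have "f a \<le> f x \<and> f x \<le> f b \<or> f b \<le> f x \<and> f x \<le> f a"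
    using assms(2)
  proof
    assume "mono_on I f"
    thus ?thesis using a b x \<open>x \<in> I\<close> mono_onD[of I f] by blast
  next
    assume "antimono_on I f"
    thus ?thesis using a b x \<open>x \<in> I\<close> monotone_onD[of I "(\<le>)" "\<lambda>x y. y \<le> x" f] by blast
  qed
  thus "x \<in> {x \<in> I. \<bar>f x - m\<bar> \<le> C}" using a b \<open>x \<in> I\<close> by (auto simp: abs_le_iff)
qed

lemma phase_level_set_in_q:
  fixes \<alpha> s z R m C :: real
  assumes "s \<in> {1, -1}"
  shows "compact {q \<in> {z\<^sup>2..R\<^sup>2}. \<bar>phase \<alpha> s z q - m\<bar> \<le> C}"
    and "is_interval {q \<in> {z\<^sup>2..R\<^sup>2}. \<bar>phase \<alpha> s z q - m\<bar> \<le> C}"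
proof -
  have "closed {q. \<bar>phase \<alpha> s z q - m\<bar> \<le> C}"
    unfolding phase_def by (intro closed_Collect_le continuous_intros)
  hence "compact ({z\<^sup>2..R\<^sup>2} \<inter> {q. \<bar>phase \<alpha> s z q - m\<bar> \<le> C})"
    by (rule compact_Int_closed[OF compact_Icc])
  thus "compact {q \<in> {z\<^sup>2..R\<^sup>2}. \<bar>phase \<alpha> s z q - m\<bar> \<le> C}"
    by (simp add: Int_def)
  have "{z\<^sup>2..R\<^sup>2} \<subseteq> {z\<^sup>2..}" by auto
  hence "mono_on {z\<^sup>2..R\<^sup>2} (phase \<alpha> s z) \<or> antimono_on {z\<^sup>2..R\<^sup>2} (phase \<alpha> s z)"
    using phase_monotone_in_q[OF assms, where \<alpha>=\<alpha> and z=z] monotone_on_subset by blast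
  thus "is_interval {q \<in> {z\<^sup>2..R\<^sup>2}. \<bar>phase \<alpha> s z q - m\<bar> \<le> C}"
    by (intro is_interval_level_set_monotone) auto
qed

section \<open>Volume of a level set of the phase\<close>

lemma emeasure_annulus_le:
  fixes J :: "real set"
  assumes "compact J" "is_interval J" "J \<subseteq> {t..}"
  shows "emeasure lborel {w :: real \<times> real. t + (norm w)\<^sup>2 \<in> J} \<le> ennreal pi * emeasure lborel J"
proof -
  obtain a b where J: "J = {a..b}"
    using assms(1,2) connected_compact_interval_1 is_interval_connected_1 by blast
  show ?thesis
  proof (cases "a \<le> b")
    case False
    thus ?thesis by (simp add: J)
  next
    case True
    with assms(3) have "t \<le> a" by (auto simp: J)
    define r1 where "r1 = sqrt (a - t)"
    define r2 where "r2 = sqrt (b - t)"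
    have r: "0 \<le> r1" "r1 \<le> r2" "r1\<^sup>2 = a - t" "r2\<^sup>2 = b - t"
      using True \<open>t \<le> a\<close> by (auto simp: r1_def r2_def)
    have "{w :: real \<times> real. t + (norm w)\<^sup>2 \<in> J} \<subseteq> cball 0 r2 - ball 0 r1"
    proof
      fix w assume "w \<in> {w. t + (norm w)\<^sup>2 \<in> J}"
      hence "(norm w)\<^sup>2 \<le> b - t" "a - t \<le> (norm w)\<^sup>2" by (auto simp: J)
      hence "norm w \<le> r2" "r1 \<le> norm w"
        unfolding r1_def r2_def by (auto intro: real_le_rsqrt real_le_lsqrt)
      thus "w \<in> cball 0 r2 - ball 0 r1" by auto
    qed
    hence "emeasure lborel {w :: real \<times> real. t + (norm w)\<^sup>2 \<in> J}
             \<le> emeasure lborel (cball (0 :: real \<times> real) r2 - ball 0 r1)"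
      by (rule emeasure_mono) simp
    also have "\<dots> = emeasure lborel (cball (0 :: real \<times> real) r2) - emeasure lborel (ball (0 :: real \<times> real) r1)"
      using r by (intro emeasure_Diff) (auto simp: emeasure_ball)
    also have "\<dots> = ennreal (pi * (b - t)) - ennreal (pi * (a - t))"
      using r by (simp add: emeasure_ball emeasure_cball unit_ball_vol_2 mult.commute flip: power2_eq_square)
    also have "\<dots> = ennreal pi * emeasure lborel J"
      using True \<open>t \<le> a\<close> by (simp add: J ennreal_minus right_diff_distrib flip: ennreal_mult)
    finally show ?thesis .
  qed
qed

lemma emeasure_cylindrical_le:
  fixes S :: "(real \<times> real) set"
  assumes S: "S \<in> sets borel"
    and sections: "\<And>z. compact {q. (z, q) \<in> S} \<and> is_interval {q. (z, q) \<in> S} \<and> {q. (z, q) \<in> S} \<subseteq> {z\<^sup>2..}"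
  shows "emeasure lborel {x :: real \<times> (real \<times> real). (fst x, (fst x)\<^sup>2 + (norm (snd x))\<^sup>2) \<in> S}
           \<le> ennreal pi * emeasure lborel S"
    (is "emeasure lborel ?T \<le> _")
proof -
  have "(\<lambda>x :: real \<times> (real \<times> real). (fst x, (fst x)\<^sup>2 + (norm (snd x))\<^sup>2)) \<in> borel_measurable borel"
    by (intro borel_measurable_continuous_onI continuous_intros)
  from measurable_sets[OF this S] have "?T \<in> sets borel" by (simp add: vimage_def)
  hence T: "?T \<in> sets (lborel \<Otimes>\<^sub>M lborel)" by (simp only: lborel_prod sets_lborel)
  have S': "S \<in> sets (lborel \<Otimes>\<^sub>M lborel)" using S by (simp only: lborel_prod sets_lborel)
  have "emeasure lborel ?T = (\<integral>\<^sup>+z. emeasure lborel (Pair z -` ?T) \<partial>lborel)"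
    using lborel.emeasure_pair_measure_alt[OF T] by (simp add: lborel_prod)
  also have "\<dots> \<le> (\<integral>\<^sup>+z. ennreal pi * emeasure lborel (Pair z -` S) \<partial>lborel)"
  proof (rule nn_integral_mono)
    fix z :: real
    have "Pair z -` ?T = {w. z\<^sup>2 + (norm w)\<^sup>2 \<in> {q. (z, q) \<in> S}}" by auto
    thus "emeasure lborel (Pair z -` ?T) \<le> ennreal pi * emeasure lborel (Pair z -` S)"
      using emeasure_annulus_le[of "{q. (z, q) \<in> S}" "z\<^sup>2"] sections[of z] by (simp add: vimage_def)
  qed
  also have "\<dots> = ennreal pi * (\<integral>\<^sup>+z. emeasure lborel (Pair z -` S) \<partial>lborel)"
    by (rule nn_integral_cmult) (rule lborel.measurable_emeasure_Pair[OF S'])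
  also have "\<dots> = ennreal pi * emeasure lborel S"
    using lborel.emeasure_pair_measure_alt[OF S'] by (simp add: lborel_prod)
  finally show ?thesis .
qed

lemma emeasure_le_of_thin_sections:
  fixes S :: "(real \<times> real) set" and I :: "real set"
  assumes S: "S \<in> sets borel" and I: "I \<in> sets borel"
    and range: "\<And>z q. (z, q) \<in> S \<Longrightarrow> q \<in> I"
    and thin: "\<And>z z' q. (z, q) \<in> S \<Longrightarrow> (z', q) \<in> S \<Longrightarrow> \<bar>z' - z\<bar> \<le> d"
  shows "emeasure lborel S \<le> ennreal (2 * d) * emeasure lborel I"
proof -
  have section_le: "emeasure lborel {z. (z, q) \<in> S} \<le> ennreal (2 * d) * indicator I q" for q
  proof (cases "\<exists>z. (z, q) \<in> S")
    case False
    thus ?thesis by simp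
  next
    case True
    then obtain z0 where z0: "(z0, q) \<in> S" ..
    have "0 \<le> d" using thin[OF z0 z0] by simp
    have "{z. (z, q) \<in> S} \<subseteq> {z0 - d .. z0 + d}"
      using thin[OF z0] by (force simp: abs_le_iff)
    hence "emeasure lborel {z. (z, q) \<in> S} \<le> emeasure lborel {z0 - d .. z0 + d}"
      by (intro emeasure_mono) auto
    also have "\<dots> = ennreal (2 * d)" using \<open>0 \<le> d\<close> by simp
    finally show ?thesis using range[OF z0] by simp
  qed
  have S': "S \<in> sets (lborel \<Otimes>\<^sub>M lborel)" using S by (simp only: lborel_prod sets_lborel)
  have "emeasure lborel S = (\<integral>\<^sup>+q. emeasure lborel ((\<lambda>z. (z, q)) -` S) \<partial>lborel)"
    using lborel_pair.emeasure_pair_measure_alt2[OF S'] by (simp add: lborel_prod)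
  also have "\<dots> \<le> (\<integral>\<^sup>+q. ennreal (2 * d) * indicator I q \<partial>lborel)"
    using section_le by (intro nn_integral_mono) (simp add: vimage_def)
  also have "\<dots> = ennreal (2 * d) * emeasure lborel I"
    using I by (simp add: nn_integral_cmult_indicator)
  finally show ?thesis .
qed

lemma emeasure_phase_region_le:
  assumes "\<alpha> > 0" "R \<ge> 0" "C \<ge> 0" "s \<in> {1, -1}"
  shows "emeasure lborel {x :: real \<times> (real \<times> real). (fst x)\<^sup>2 + (norm (snd x))\<^sup>2 \<le> R\<^sup>2 \<and>
             \<bar>phase \<alpha> s (fst x) ((fst x)\<^sup>2 + (norm (snd x))\<^sup>2) - m\<bar> \<le> C}
           \<le> ennreal (pi * (4 * C * (1 + R + \<alpha>) / \<alpha>) * R\<^sup>2)"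
proof -
  define S where "S = {x :: real \<times> real. (fst x)\<^sup>2 \<le> snd x \<and> snd x \<le> R\<^sup>2 \<and> \<bar>phase \<alpha> s (fst x) (snd x) - m\<bar> \<le> C}"
  have S_closed: "closed S"
    unfolding S_def phase_def by (intro closed_Collect_conj closed_Collect_le continuous_intros)
  have section_eq: "{q. (z, q) \<in> S} = {q \<in> {z\<^sup>2..R\<^sup>2}. \<bar>phase \<alpha> s z q - m\<bar> \<le> C}" for z
    by (auto simp: S_def)
  have "emeasure lborel {x :: real \<times> (real \<times> real). (fst x, (fst x)\<^sup>2 + (norm (snd x))\<^sup>2) \<in> S}
      \<le> ennreal pi * emeasure lborel S"
    using S_closed phase_level_set_in_q[OF assms(4)] by (intro emeasure_cylindrical_le) (auto simp: section_eq)
  moreover have "emeasure lborel S \<le> ennreal (2 * (2 * C * (1 + R + \<alpha>) / \<alpha>)) * emeasure lborel {0..R\<^sup>2}"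
  proof (rule emeasure_le_of_thin_sections)
    show "q \<in> {0..R\<^sup>2}" if "(z, q) \<in> S" for z q
    proof -
      have "z\<^sup>2 \<le> q" "q \<le> R\<^sup>2" using that by (auto simp: S_def)
      moreover have "0 \<le> q" using \<open>z\<^sup>2 \<le> q\<close> by (meson order_trans zero_le_power2)
      ultimately show ?thesis by simp
    qed
    show "\<bar>z' - z\<bar> \<le> 2 * C * (1 + R + \<alpha>) / \<alpha>" if "(z, q) \<in> S" "(z', q) \<in> S" for z z' q
      using that assms(1,2) by (intro phase_level_set_thin_in_z[of \<alpha> R z q z' s m C]) (auto simp: S_def)
  qed (use S_closed in auto)
  ultimately have "emeasure lborel {x :: real \<times> (real \<times> real). (fst x, (fst x)\<^sup>2 + (norm (snd x))\<^sup>2) \<in> S}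
      \<le> ennreal pi * (ennreal (2 * (2 * C * (1 + R + \<alpha>) / \<alpha>)) * ennreal (R\<^sup>2))"
    by (simp add: order_trans mult_left_mono)
  also have "\<dots> = ennreal (pi * (4 * C * (1 + R + \<alpha>) / \<alpha>) * R\<^sup>2)"
    using assms(1-3) by (simp add: mult.assoc flip: ennreal_mult)
  finally show ?thesis by (simp add: S_def)
qed

section \<open>Packing\<close>

lemma card_mult_ball_measure_le:
  fixes P :: "'a::euclidean_space set"
  assumes "finite P" "r \<ge> 0"
    and separated: "\<And>p q. p \<in> P \<Longrightarrow> q \<in> P \<Longrightarrow> p \<noteq> q \<Longrightarrow> 2 * r \<le> dist p q"
    and "(\<Union>p\<in>P. ball p r) \<subseteq> X" "X \<in> sets lborel"
  shows "of_nat (card P) * emeasure lborel (ball (0 :: 'a) r) \<le> emeasure lborel X"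
proof -
  have "disjoint_family_on (\<lambda>p. ball p r) P"
    unfolding disjoint_family_on_def
  proof (intro ballI impI equalityI subsetI)
    fix p q x assume "p \<in> P" "q \<in> P" "p \<noteq> q" "x \<in> ball p r \<inter> ball q r"
    hence "dist p q < 2 * r" and "2 * r \<le> dist p q"
      using dist_triangle_less_add[of p x r q r] separated by (auto simp: dist_commute)
    thus "x \<in> {}" by simp
  qed simp
  hence "(\<Sum>p\<in>P. emeasure lborel (ball p r)) = emeasure lborel (\<Union>p\<in>P. ball p r)"
    using assms(1) by (intro sum_emeasure) auto
  also have "\<dots> \<le> emeasure lborel X"
    using assms(4,5) by (rule emeasure_mono)
  finally show ?thesis using assms(2) by (simp add: emeasure_ball)
qed

lemma sqrt_one_plus_norm_sq_lipschitz:
  fixes x y :: "'a::real_normed_vector"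
  shows "\<bar>sqrt (1 + (norm x)\<^sup>2) - sqrt (1 + (norm y)\<^sup>2)\<bar> \<le> norm (x - y)"
proof -
  have "\<bar>norm (1 :: real, x) - norm (1 :: real, y)\<bar> \<le> norm ((1 :: real, x) - (1, y))"
    by (rule norm_triangle_ineq3)
  thus ?thesis by (simp add: norm_Pair)
qed

definition vec3_split :: "real^3 \<Rightarrow> real \<times> (real \<times> real)" where
  "vec3_split y = (y$1, (y$2, y$3))"

lemma vec3_split_measurable: "vec3_split \<in> borel_measurable lborel"
proof -
  have "continuous_on UNIV vec3_split"
    unfolding vec3_split_def by (intro continuous_intros)
  hence "vec3_split \<in> borel_measurable borel" by (rule borel_measurable_continuous_onI)
  thus ?thesis by (simp add: measurable_lborel1)
qed

lemma norm_vec3_split: "(fst (vec3_split y))\<^sup>2 + (norm (snd (vec3_split y)))\<^sup>2 = (norm y)\<^sup>2"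
  by (simp add: vec3_split_def norm_Pair norm_vec_def L2_set_def sum_3 add.assoc)

lemma prod_Basis_vec3: "(\<Prod>b\<in>(Basis :: (real^3) set). f b) = f (axis 1 1) * f (axis 2 1) * f (axis 3 1)"
proof -
  have "(\<Prod>b\<in>(Basis :: (real^3) set). f b) = (\<Prod>i\<in>UNIV. f (axis i 1))"
    by (simp add: Basis_vec_def axis_eq_axis prod.UNION_disjoint)
  also have "\<dots> = f (axis 1 1) * f (axis 2 1) * f (axis 3 1)"
    unfolding UNIV_3 by (simp add: ac_simps)
  finally show ?thesis .
qed

lemma distr_lborel_vec3_split: "distr lborel borel vec3_split = lborel"
proof (rule lborel_eqI[symmetric])
  fix l u :: "real \<times> (real \<times> real)"
  assume lu: "\<And>b. b \<in> Basis \<Longrightarrow> l \<bullet> b \<le> u \<bullet> b"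
  obtain l1 l2 l3 u1 u2 u3 where l: "l = (l1, (l2, l3))" and u: "u = (u1, (u2, u3))"
    by (metis prod.exhaust)
  define l' :: "real^3" where "l' = vector [l1, l2, l3]"
  define u' :: "real^3" where "u' = vector [u1, u2, u3]"
  have "l1 \<le> u1" "l2 \<le> u2" "l3 \<le> u3"
    using lu[of "(1, 0)"] lu[of "(0, (1, 0))"] lu[of "(0, (0, 1))"] by (auto simp: l u Basis_prod_def)
  hence "\<forall>b\<in>Basis. l' \<bullet> b \<le> u' \<bullet> b"
    by (auto simp: Basis_vec_def inner_axis l'_def u'_def forall_3)
  moreover have "vec3_split -` box l u = box l' u'"
    by (auto simp: vec3_split_def l u l'_def u'_def mem_box_cart forall_3 Basis_prod_def mem_box inner_prod_def)
  moreover have "emeasure (distr lborel borel vec3_split) (box l u) = emeasure lborel (vec3_split -` box l u)"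
    by (subst emeasure_distr[OF vec3_split_measurable]) simp_all
  ultimately have "emeasure (distr lborel borel vec3_split) (box l u) = (\<Prod>b\<in>Basis. (u' - l') \<bullet> b)"
    by (simp add: emeasure_lborel_box_eq)
  also have "\<dots> = (\<Prod>b\<in>Basis. (u - l) \<bullet> b)"
    by (simp add: prod_Basis_vec3 inner_axis l'_def u'_def l u Basis_prod_def prod.union_disjoint prod.reindex mult_ac)
  finally show "emeasure (distr lborel borel vec3_split) (box l u) = (\<Prod>b\<in>Basis. (u - l) \<bullet> b)" .
qed simp

lemma emeasure_vimage_vec3_split:
  assumes "T \<in> sets borel"
  shows "emeasure lborel (vec3_split -` T) = emeasure lborel T"
proof -
  have "emeasure lborel (vec3_split -` T) = emeasure (distr lborel borel vec3_split) T"
    using assms by (subst emeasure_distr[OF vec3_split_measurable]) simp_all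
  thus ?thesis by (simp add: distr_lborel_vec3_split)
qed

lemma phase_vec3:
  fixes y :: "real^3"
  shows "phase \<alpha> s (y$1) ((norm y)\<^sup>2) = sqrt (1 + (norm (\<alpha> *\<^sub>R axis 1 1 + y))\<^sup>2) + s * sqrt (1 + (norm y)\<^sup>2)"
proof -
  have "(norm (\<alpha> *\<^sub>R axis 1 1 + y))\<^sup>2 = (norm y)\<^sup>2 + 2 * \<alpha> * y$1 + \<alpha>\<^sup>2"
    unfolding power2_norm_eq_inner
    by (simp add: inner_add_left inner_add_right inner_axis inner_axis' inner_commute)
       (simp add: power2_eq_square)
  thus ?thesis by (simp add: phase_def add.assoc)
qed

lemma card_separated_near_phase_level_axis:
  fixes P :: "(real^3) set"
  assumes "\<alpha> > 0" "s \<in> {1, -1}" "C \<ge> 0" "R \<ge> 0" "finite P"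
    and separated: "\<And>p q. p \<in> P \<Longrightarrow> q \<in> P \<Longrightarrow> p \<noteq> q \<Longrightarrow> 1 \<le> dist p q"
    and near: "\<And>p. p \<in> P \<Longrightarrow> norm p \<le> R \<and> \<bar>phase \<alpha> s (p$1) ((norm p)\<^sup>2) - m\<bar> \<le> C"
  shows "real (card P) \<le> 24 * (C + 1) * (2 + R + \<alpha>) * (R + 1)\<^sup>2 / \<alpha>"
proof -
  define T where "T = {x :: real \<times> (real \<times> real). (fst x)\<^sup>2 + (norm (snd x))\<^sup>2 \<le> (R + 1)\<^sup>2 \<and>
    \<bar>phase \<alpha> s (fst x) ((fst x)\<^sup>2 + (norm (snd x))\<^sup>2) - m\<bar> \<le> C + 1}"
  have "closed T"
    unfolding T_def phase_def by (intro closed_Collect_conj closed_Collect_le continuous_intros)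
  hence X: "vec3_split -` T \<in> sets lborel"
    using measurable_sets[OF vec3_split_measurable, of T] by simp
  have "(\<Union>p\<in>P. ball p (1/2)) \<subseteq> vec3_split -` T"
  proof clarify
    fix p y assume "p \<in> P" "y \<in> ball p (1/2)"
    hence py: "norm (y - p) < 1/2" by (simp add: dist_norm norm_minus_commute)
    have "norm y \<le> R + 1"
      using norm_triangle_ineq2[of y p] py near[OF \<open>p \<in> P\<close>] by linarith
    moreover have "\<bar>phase \<alpha> s (y$1) ((norm y)\<^sup>2) - phase \<alpha> s (p$1) ((norm p)\<^sup>2)\<bar> \<le> 1"
      using sqrt_one_plus_norm_sq_lipschitz[of "\<alpha> *\<^sub>R axis 1 1 + y" "\<alpha> *\<^sub>R axis 1 1 + p"]
        sqrt_one_plus_norm_sq_lipschitz[of y p] py assms(2)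
      unfolding phase_vec3 by (auto simp: abs_le_iff)
    ultimately show "y \<in> vec3_split -` T"
      using near[OF \<open>p \<in> P\<close>] assms(4) norm_vec3_split[of y]
      by (auto simp: T_def vec3_split_def power_mono)
  qed
  hence "of_nat (card P) * emeasure lborel (ball (0 :: real^3) (1/2)) \<le> emeasure lborel (vec3_split -` T)"
    using assms(5) separated X by (intro card_mult_ball_measure_le) auto
  also have "\<dots> = emeasure lborel T"
    using \<open>closed T\<close> by (simp add: emeasure_vimage_vec3_split)
  also have "\<dots> \<le> ennreal (pi * (4 * (C + 1) * (1 + (R + 1) + \<alpha>) / \<alpha>) * (R + 1)\<^sup>2)"
    unfolding T_def using assms(1-4) by (intro emeasure_phase_region_le) auto
  finally have "real (card P) * (pi / 6) \<le> pi * (4 * (C + 1) * (2 + R + \<alpha>) / \<alpha>) * (R + 1)\<^sup>2"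
    using assms(1,3,4) by (simp add: emeasure_ball unit_ball_vol_3 ennreal_of_nat_eq_real_of_nat
        power3_eq_cube add.assoc flip: ennreal_mult)
  also have "pi * (4 * (C + 1) * (2 + R + \<alpha>) / \<alpha>) * (R + 1)\<^sup>2
      = 24 * (C + 1) * (2 + R + \<alpha>) * (R + 1)\<^sup>2 / \<alpha> * (pi / 6)"
    using assms(1) by (simp add: field_simps)
  finally show ?thesis by (rule mult_right_le_imp_le) simp
qed

lemma card_separated_near_level_set:
  fixes a :: "real^3" and P :: "(real^3) set"
  assumes "a \<noteq> 0" "s \<in> {1, -1}" "C \<ge> 0" "R \<ge> 0" "finite P"
    and separated: "\<And>p q. p \<in> P \<Longrightarrow> q \<in> P \<Longrightarrow> p \<noteq> q \<Longrightarrow> 1 \<le> dist p q"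
    and near: "\<And>p. p \<in> P \<Longrightarrow>
      norm p \<le> R \<and> \<bar>sqrt (1 + (norm (a + p))\<^sup>2) + s * sqrt (1 + (norm p)\<^sup>2) - m\<bar> \<le> C"
  shows "real (card P) \<le> 24 * (C + 1) * (2 + R + norm a) * (R + 1)\<^sup>2 / norm a"
proof -
  obtain g :: "real^3 \<Rightarrow> real^3" where g: "orthogonal_transformation g" "g a = norm a *\<^sub>R axis 1 1"
    using orthogonal_transformation_exists[of a "norm a *\<^sub>R axis 1 1"] by auto
  hence "linear g" and norm_g: "\<And>x. norm (g x) = norm x"
    by (auto simp: orthogonal_transformation)
  have "inj g" using g(1) by (rule orthogonal_transformation_inj)
  have dist_g: "dist (g p) (g q) = dist p q" for p q
    using norm_g[of "p - q"] \<open>linear g\<close> by (simp add: dist_norm linear_diff)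
  have shift_g: "norm a *\<^sub>R axis 1 1 + g p = g (a + p)" for p
    using g(2) \<open>linear g\<close> by (simp add: linear_add)
  have "real (card (g ` P)) \<le> 24 * (C + 1) * (2 + R + norm a) * (R + 1)\<^sup>2 / norm a"
  proof (rule card_separated_near_phase_level_axis)
    show "1 \<le> dist p' q'" if "p' \<in> g ` P" "q' \<in> g ` P" "p' \<noteq> q'" for p' q'
      using that separated by (force simp: dist_g)
    show "norm p' \<le> R \<and> \<bar>phase (norm a) s (p'$1) ((norm p')\<^sup>2) - m\<bar> \<le> C" if "p' \<in> g ` P" for p'
      using that near by (auto simp: phase_vec3 shift_g norm_g)
  qed (use assms in auto)
  thus ?thesis using \<open>inj g\<close> by (simp add: card_image inj_on_subset)
qed

section \<open>Counting lattice points\<close>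

definition real_of_int_vec :: "int^3 \<Rightarrow> real^3" where
  "real_of_int_vec v = (\<chi> i. real_of_int (v$i))"

lemma norm_real_of_int_vec: "norm (real_of_int_vec v) = inorm v"
  by (simp add: inorm_def norm_vec_def L2_set_def real_of_int_vec_def)

lemma jbr_eq: "jbr v = sqrt (1 + (norm (real_of_int_vec v))\<^sup>2)"
  by (simp add: jbr_def norm_real_of_int_vec)

lemma real_of_int_vec_add: "real_of_int_vec (v + w) = real_of_int_vec v + real_of_int_vec w"
  by (simp add: real_of_int_vec_def vec_eq_iff)

lemma dist_real_of_int_vec_ge_1:
  assumes "v \<noteq> w"
  shows "1 \<le> dist (real_of_int_vec v) (real_of_int_vec w)"
proof -
  obtain i where "v$i \<noteq> w$i" using assms by (auto simp: vec_eq_iff)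
  hence "1 \<le> \<bar>(real_of_int_vec v - real_of_int_vec w)$i\<bar>" by (simp add: real_of_int_vec_def)
  thus ?thesis using component_le_norm_cart[of "real_of_int_vec v - real_of_int_vec w" i]
    by (simp add: dist_norm)
qed

lemma inorm_ge_1:
  assumes "v \<noteq> 0"
  shows "1 \<le> inorm v"
proof -
  have "real_of_int_vec 0 = 0" by (simp add: real_of_int_vec_def vec_eq_iff)
  thus ?thesis
    using dist_real_of_int_vec_ge_1[OF assms] by (simp add: dist_norm norm_real_of_int_vec)
qed

lemma card_lattice_points_near_level_set:
  fixes a :: "int^3" and S :: "(int^3) set"
  assumes "s \<in> {1, -1}" "C \<ge> 0" "R \<ge> 0"
    and S: "\<And>n. n \<in> S \<Longrightarrow> inorm n \<le> R \<and> \<bar>jbr (a + n) + s * jbr n - m\<bar> \<le> C"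
  shows "real (card S) \<le> 24 * (C + 2) * (2 + R + max 1 (inorm a)) * (R + 1)\<^sup>2 / max 1 (inorm a)"
proof (cases "finite S")
  case False
  thus ?thesis using assms(2,3) by simp
next
  case True
  \<comment> \<open>For a = 0 use e_1 instead: this moves <a + n> by at most 1, whence C + 2 and max 1 |a|.\<close>
  define a' :: "real^3" where "a' = (if a = 0 then axis 1 1 else real_of_int_vec a)"
  have norm_a': "norm a' = max 1 (inorm a)"
  proof (cases "a = 0")
    case True
    have "inorm 0 = 0" by (simp add: inorm_def)
    thus ?thesis using True by (simp add: a'_def)
  next
    case False
    thus ?thesis using inorm_ge_1[OF False] by (simp add: a'_def norm_real_of_int_vec)
  qed
  have "a' \<noteq> 0"
  proof
    assume "a' = 0"
    thus False using norm_a' by simp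
  qed
  have separated: "1 \<le> dist p q"
    if "p \<in> real_of_int_vec ` S" "q \<in> real_of_int_vec ` S" and "p \<noteq> q" for p q
  proof -
    obtain v w where "p = real_of_int_vec v" "q = real_of_int_vec w"
      using \<open>p \<in> real_of_int_vec ` S\<close> \<open>q \<in> real_of_int_vec ` S\<close> by blast
    moreover from this have "v \<noteq> w" using \<open>p \<noteq> q\<close> by blast
    ultimately show ?thesis using dist_real_of_int_vec_ge_1 by simp
  qed
  have near: "norm p \<le> R \<and> \<bar>sqrt (1 + (norm (a' + p))\<^sup>2) + s * sqrt (1 + (norm p)\<^sup>2) - m\<bar> \<le> C + 1"
    if "p \<in> real_of_int_vec ` S" for p
  proof -
    obtain n where n: "n \<in> S" "p = real_of_int_vec n" using \<open>p \<in> real_of_int_vec ` S\<close> by blast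
    have "\<bar>sqrt (1 + (norm (a' + p))\<^sup>2) - sqrt (1 + (norm (real_of_int_vec a + p))\<^sup>2)\<bar> \<le> 1"
    proof (cases "a = 0")
      case True
      hence "real_of_int_vec a = 0" by (simp add: real_of_int_vec_def vec_eq_iff)
      thus ?thesis using sqrt_one_plus_norm_sq_lipschitz[of "axis 1 1 + p" p] True by (simp add: a'_def)
    qed (simp add: a'_def)
    moreover have "\<bar>sqrt (1 + (norm (real_of_int_vec a + p))\<^sup>2) + s * sqrt (1 + (norm p)\<^sup>2) - m\<bar> \<le> C"
      and "norm p \<le> R"
      using S[OF n(1)] by (simp_all add: n jbr_eq real_of_int_vec_add norm_real_of_int_vec)
    ultimately show ?thesis unfolding abs_le_iff by linarith
  qed
  have "real (card (real_of_int_vec ` S)) \<le> 24 * (C + 1 + 1) * (2 + R + norm a') * (R + 1)\<^sup>2 / norm a'"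
    using card_separated_near_level_set[OF \<open>a' \<noteq> 0\<close> assms(1) _ assms(3) _ separated near] assms(2) True
    by simp
  moreover have "inj real_of_int_vec"
    by (rule injI) (simp add: real_of_int_vec_def vec_eq_iff)
  ultimately show ?thesis by (simp add: card_image inj_on_subset norm_a' add.assoc)
qed

lemma sim_le_mult:
  assumes "c \<ge> 1" "sim c x N"
  shows "x \<le> c * N"
  using assms by (auto simp: sim_def split: if_splits)

lemma inverse_max_1_inorm_le:
  assumes "c \<ge> 1" "A \<ge> 1" "N \<ge> 1" "sim c (inorm a) A"
  shows "1 / max 1 (inorm a) \<le> c / min A N"
proof (cases "A = 1")
  case True
  have "1 / max 1 (inorm a) \<le> 1" by simp
  also have "\<dots> \<le> c / min A N" using True assms(1,3) by simp
  finally show ?thesis .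
next
  case False
  hence "A / c \<le> inorm a" using assms(4) by (simp add: sim_def)
  hence "A / c \<le> max 1 (inorm a)" by linarith
  hence "1 / max 1 (inorm a) \<le> c / A"
    using assms(1,2) by (simp add: field_simps)
  also have "\<dots> \<le> c / min A N"
    using assms(1-3) by (intro divide_left_mono) auto
  finally show ?thesis .
qed

lemma lattice_bound_simplify:
  fixes c N \<mu> \<alpha> D :: real
  assumes "c \<ge> 1" "N \<ge> 1" "0 < \<mu>" "\<mu> \<le> N" "\<alpha> > 0" "1 / \<alpha> \<le> c / \<mu>" "D \<ge> 0"
  shows "24 * D * (2 + c * N + \<alpha>) * (c * N + 1)\<^sup>2 / \<alpha> \<le> 96 * D * c\<^sup>2 * (3 * c\<^sup>2 + 1) * N ^ 3 / \<mu>"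
proof -
  have cN: "1 \<le> c * N" using assms(1,2) mult_mono[of 1 c 1 N] by simp
  have "(2 + c * N + \<alpha>) / \<alpha> = (2 + c * N) * (1 / \<alpha>) + 1"
    using assms(5) by (simp add: field_simps)
  also have "\<dots> \<le> (3 * c * N) * (c / \<mu>) + N / \<mu>"
  proof (intro add_mono mult_mono)
    show "2 + c * N \<le> 3 * c * N" using cN by linarith
    show "1 \<le> N / \<mu>" using assms(3,4) by simp
  qed (use assms cN in auto)
  also have "\<dots> = (3 * c\<^sup>2 + 1) * N / \<mu>"
    using assms(3) by (simp add: field_simps power2_eq_square)
  finally have ratio: "(2 + c * N + \<alpha>) / \<alpha> \<le> (3 * c\<^sup>2 + 1) * N / \<mu>" .
  have "(c * N + 1)\<^sup>2 \<le> (2 * (c * N))\<^sup>2"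
    using cN by (intro power_mono) linarith+
  hence square: "(c * N + 1)\<^sup>2 \<le> 4 * c\<^sup>2 * N\<^sup>2"
    by (simp add: power_mult_distrib)
  have "24 * D * (2 + c * N + \<alpha>) * (c * N + 1)\<^sup>2 / \<alpha> = 24 * D * ((2 + c * N + \<alpha>) / \<alpha>) * (c * N + 1)\<^sup>2"
    by simp
  also have "\<dots> \<le> 24 * D * ((3 * c\<^sup>2 + 1) * N / \<mu>) * (4 * c\<^sup>2 * N\<^sup>2)"
    using ratio square assms(1,2,3,5,7) cN by (intro mult_mono) auto
  also have "\<dots> = 96 * D * c\<^sup>2 * (3 * c\<^sup>2 + 1) * N ^ 3 / \<mu>"
    by (simp add: field_simps power2_eq_square power3_eq_cube)
  finally show ?thesis .
qed

theorem lemma4p15: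
  fixes c C :: real
  assumes "c \<ge> 1" and "C > 0"
  shows "\<exists>K::real. \<forall>(a::int^3) (A::real) (N::real) (s::real) (m::int).
           A \<ge> 1 \<longrightarrow> N \<ge> 1 \<longrightarrow> sim c (inorm a) A \<longrightarrow> s \<in> {1, -1} \<longrightarrow>
           real (card {n::int^3. sim c (inorm n) N \<and>
                         \<bar>jbr (a + n) + s * jbr n - real_of_int m\<bar> \<le> C})
             \<le> K * N ^ 3 / min A N"
proof (intro exI[of _ "96 * (C + 2) * c\<^sup>2 * (3 * c\<^sup>2 + 1)"] allI impI)
  fix a :: "int^3" and A N s :: real and m :: int
  assume "A \<ge> 1" "N \<ge> 1" "sim c (inorm a) A" "s \<in> {1, -1}"
  let ?S = "{n::int^3. sim c (inorm n) N \<and> \<bar>jbr (a + n) + s * jbr n - real_of_int m\<bar> \<le> C}"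
  have "real (card ?S) \<le> 24 * (C + 2) * (2 + c * N + max 1 (inorm a)) * (c * N + 1)\<^sup>2 / max 1 (inorm a)"
    using \<open>s \<in> {1, -1}\<close> assms \<open>N \<ge> 1\<close> sim_le_mult[OF assms(1)]
    by (intro card_lattice_points_near_level_set) auto
  also have "\<dots> \<le> 96 * (C + 2) * c\<^sup>2 * (3 * c\<^sup>2 + 1) * N ^ 3 / min A N"
    using assms \<open>A \<ge> 1\<close> \<open>N \<ge> 1\<close> inverse_max_1_inorm_le[OF assms(1) \<open>A \<ge> 1\<close> \<open>N \<ge> 1\<close> \<open>sim c (inorm a) A\<close>]
    by (intro lattice_bound_simplify) auto
  finally show "real (card ?S) \<le> 96 * (C + 2) * c\<^sup>2 * (3 * c\<^sup>2 + 1) * N ^ 3 / min A N" .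
qed

end
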